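(* Let $\mathsf L$ be a comonad over $\mathrm{dom}$ on $\mathcal{C}^{\mathbf 2}$, and let $(f,s)$ and $(g,t)$ be $\mathsf L$-coalgebras with $f\colon X\to Y$ an isomorphism. Then every morphism $(h,k)\colon f\to g$ of $\mathcal{C}^{\mathbf 2}$ is a morphism of $\mathsf L$-coalgebras $(f,s)\to(g,t)$.
   Context: $\mathcal{C}^{\mathbf 2}$ is the arrow category (morphisms $(h,k)\colon f\to g$ are commuting squares $gh=kf$). A comonad over $\mathrm{dom}$ is given by a functorial factorisation $(E,\lambda,\rho)$ ($E\colon\mathcal{C}^{\mathbf 2}\to\mathcal{C}$, natural $\lambda\colon\mathrm{dom}\Rightarrow E$, $\rho\colon E\Rightarrow\mathrm{cod}$, $\rho_f\lambda_f=f$) with natural maps $\sigma_f\colon Ef\to E(\lambda_f)$ with $\sigma_f\lambda_f=\lambda_{\lambda_f}$, $\rho_{\lambda_f}\sigma_f=1$, $E(1_X,\rho_f)\sigma_f=1$, $E(1_X,\sigma_f)\sigma_f=\sigma_{\lambda_f}\sigma_f$. An $\mathsf L$-coalgebra is $(f,s)$ with $s\colon Y\to Ef$, $sf=\lambda_f$, $\rho_fs=1_Y$, $\sigma_fs=E(1_X,s)s$; a morphism $(h,k)\colon(f,s)\to(g,t)$ is a square with $tk=E(h,k)s$. *)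

theory Defs
  imports Main
begin

record ('o, 'a) cat =
  Obj   :: "'o set"
  Arr   :: "'a set"
  Dom   :: "'a \<Rightarrow> 'o"
  Cod   :: "'a \<Rightarrow> 'o"
  Ide   :: "'o \<Rightarrow> 'a"
  Comp  :: "'a \<Rightarrow> 'a \<Rightarrow> 'a"   (* Comp C g f = g \<circ> f, defined when Dom g = Cod f *)

definition category :: "('o, 'a) cat \<Rightarrow> bool" where
  "category C \<longleftrightarrow>
     (\<forall>f\<in>Arr C. Dom C f \<in> Obj C \<and> Cod C f \<in> Obj C) \<and>
     (\<forall>x\<in>Obj C. Ide C x \<in> Arr C \<and> Dom C (Ide C x) = x \<and> Cod C (Ide C x) = x) \<and>
     (\<forall>f\<in>Arr C. \<forall>g\<in>Arr C. Dom C g = Cod C f \<longrightarrow>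
        Comp C g f \<in> Arr C \<and> Dom C (Comp C g f) = Dom C f \<and> Cod C (Comp C g f) = Cod C g) \<and>
     (\<forall>f\<in>Arr C. Comp C f (Ide C (Dom C f)) = f \<and> Comp C (Ide C (Cod C f)) f = f) \<and>
     (\<forall>f\<in>Arr C. \<forall>g\<in>Arr C. \<forall>h\<in>Arr C. Dom C g = Cod C f \<longrightarrow> Dom C h = Cod C g \<longrightarrow>
        Comp C h (Comp C g f) = Comp C (Comp C h g) f)"

definition iso :: "('o, 'a) cat \<Rightarrow> 'a \<Rightarrow> bool" where
  "iso C f \<longleftrightarrow> f \<in> Arr C \<and> (\<exists>f'\<in>Arr C. Dom C f' = Cod C f \<and> Cod C f' = Dom C f \<and>
      Comp C f' f = Ide C (Dom C f) \<and> Comp C f f' = Ide C (Cod C f))"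

text \<open>Morphisms of the arrow category: (h,k) : f \<rightarrow> g is a commuting square g h = k f.\<close>
definition square :: "('o, 'a) cat \<Rightarrow> 'a \<Rightarrow> 'a \<Rightarrow> 'a \<Rightarrow> 'a \<Rightarrow> bool" where
  "square C f g h k \<longleftrightarrow> f \<in> Arr C \<and> g \<in> Arr C \<and> h \<in> Arr C \<and> k \<in> Arr C \<and>
     Dom C h = Dom C f \<and> Cod C h = Dom C g \<and> Dom C k = Cod C f \<and> Cod C k = Cod C g \<and>
     Comp C g h = Comp C k f"

text \<open>E0 f is the object E f; E1 f g h k is the arrow E(h,k) : E f \<rightarrow> E g for a square
  (h,k) : f \<rightarrow> g (depending on source and target in the arrow category);
  lam f = \<lambda>_f : dom f \<rightarrow> E f, rho f = \<rho>_f : E f \<rightarrow> cod f.\<close>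
definition functorial_factorisation ::
  "('o, 'a) cat \<Rightarrow> ('a \<Rightarrow> 'o) \<Rightarrow> ('a \<Rightarrow> 'a \<Rightarrow> 'a \<Rightarrow> 'a \<Rightarrow> 'a)
    \<Rightarrow> ('a \<Rightarrow> 'a) \<Rightarrow> ('a \<Rightarrow> 'a) \<Rightarrow> bool" where
  "functorial_factorisation C E0 E1 lam rho \<longleftrightarrow>
     \<comment> \<open>E is a functor C^2 \<rightarrow> C\<close>
     (\<forall>f\<in>Arr C. E0 f \<in> Obj C) \<and>
     (\<forall>f g h k. square C f g h k \<longrightarrow>
        E1 f g h k \<in> Arr C \<and> Dom C (E1 f g h k) = E0 f \<and> Cod C (E1 f g h k) = E0 g) \<and>
     (\<forall>f\<in>Arr C. E1 f f (Ide C (Dom C f)) (Ide C (Cod C f)) = Ide C (E0 f)) \<and>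
     (\<forall>f g j h k h' k'. square C f g h k \<longrightarrow> square C g j h' k' \<longrightarrow>
        E1 f j (Comp C h' h) (Comp C k' k) = Comp C (E1 g j h' k') (E1 f g h k)) \<and>
     \<comment> \<open>components of \<lambda> and \<rho>, and \<rho>_f \<lambda>_f = f\<close>
     (\<forall>f\<in>Arr C. lam f \<in> Arr C \<and> Dom C (lam f) = Dom C f \<and> Cod C (lam f) = E0 f) \<and>
     (\<forall>f\<in>Arr C. rho f \<in> Arr C \<and> Dom C (rho f) = E0 f \<and> Cod C (rho f) = Cod C f) \<and>
     (\<forall>f\<in>Arr C. Comp C (rho f) (lam f) = f) \<and>
     \<comment> \<open>naturality of \<lambda> : dom \<Rightarrow> E and \<rho> : E \<Rightarrow> cod\<close>
     (\<forall>f g h k. square C f g h k \<longrightarrow> Comp C (E1 f g h k) (lam f) = Comp C (lam g) h) \<and>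
     (\<forall>f g h k. square C f g h k \<longrightarrow> Comp C (rho g) (E1 f g h k) = Comp C k (rho f))"

definition comonad_over_dom ::
  "('o, 'a) cat \<Rightarrow> ('a \<Rightarrow> 'o) \<Rightarrow> ('a \<Rightarrow> 'a \<Rightarrow> 'a \<Rightarrow> 'a \<Rightarrow> 'a)
    \<Rightarrow> ('a \<Rightarrow> 'a) \<Rightarrow> ('a \<Rightarrow> 'a) \<Rightarrow> ('a \<Rightarrow> 'a) \<Rightarrow> bool" where
  "comonad_over_dom C E0 E1 lam rho sig \<longleftrightarrow>
     category C \<and>
     functorial_factorisation C E0 E1 lam rho \<and>
     (\<forall>f\<in>Arr C. sig f \<in> Arr C \<and> Dom C (sig f) = E0 f \<and> Cod C (sig f) = E0 (lam f)) \<and>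
     \<comment> \<open>naturality: \<sigma>_g E(h,k) = E(h, E(h,k)) \<sigma>_f, where (h,E(h,k)) : \<lambda>_f \<rightarrow> \<lambda>_g\<close>
     (\<forall>f g h k. square C f g h k \<longrightarrow>
        Comp C (sig g) (E1 f g h k) = Comp C (E1 (lam f) (lam g) h (E1 f g h k)) (sig f)) \<and>
     (\<forall>f\<in>Arr C. Comp C (sig f) (lam f) = lam (lam f)) \<and>
     (\<forall>f\<in>Arr C. Comp C (rho (lam f)) (sig f) = Ide C (E0 f)) \<and>
     (\<forall>f\<in>Arr C. Comp C (E1 (lam f) f (Ide C (Dom C f)) (rho f)) (sig f) = Ide C (E0 f)) \<and>
     (\<forall>f\<in>Arr C. Comp C (E1 (lam f) (lam (lam f)) (Ide C (Dom C f)) (sig f)) (sig f)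
                  = Comp C (sig (lam f)) (sig f))"

text \<open>(f,s) is an L-coalgebra, s : Y \<rightarrow> E f, where (1_X, s) : f \<rightarrow> \<lambda>_f.\<close>
definition L_coalgebra ::
  "('o, 'a) cat \<Rightarrow> ('a \<Rightarrow> 'o) \<Rightarrow> ('a \<Rightarrow> 'a \<Rightarrow> 'a \<Rightarrow> 'a \<Rightarrow> 'a)
    \<Rightarrow> ('a \<Rightarrow> 'a) \<Rightarrow> ('a \<Rightarrow> 'a) \<Rightarrow> ('a \<Rightarrow> 'a) \<Rightarrow> 'a \<Rightarrow> 'a \<Rightarrow> bool" where
  "L_coalgebra C E0 E1 lam rho sig f s \<longleftrightarrow>
     f \<in> Arr C \<and> s \<in> Arr C \<and> Dom C s = Cod C f \<and> Cod C s = E0 f \<and>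
     Comp C s f = lam f \<and>
     Comp C (rho f) s = Ide C (Cod C f) \<and>
     Comp C (sig f) s = Comp C (E1 f (lam f) (Ide C (Dom C f)) s) s"

definition L_coalgebra_morphism ::
  "('o, 'a) cat \<Rightarrow> ('a \<Rightarrow> 'o) \<Rightarrow> ('a \<Rightarrow> 'a \<Rightarrow> 'a \<Rightarrow> 'a \<Rightarrow> 'a)
    \<Rightarrow> ('a \<Rightarrow> 'a) \<Rightarrow> ('a \<Rightarrow> 'a) \<Rightarrow> ('a \<Rightarrow> 'a)
    \<Rightarrow> 'a \<Rightarrow> 'a \<Rightarrow> 'a \<Rightarrow> 'a \<Rightarrow> 'a \<Rightarrow> 'a \<Rightarrow> bool" where
  "L_coalgebra_morphism C E0 E1 lam rho sig f s g t h k \<longleftrightarrow>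
     L_coalgebra C E0 E1 lam rho sig f s \<and> L_coalgebra C E0 E1 lam rho sig g t \<and>
     square C f g h k \<and> Comp C t k = Comp C (E1 f g h k) s"

end

theory Submission
  imports Defs
begin

text \<open>For any square \<open>(h,k) : f \<rightarrow> g\<close> between coalgebras, the two maps \<open>t k\<close> and
  \<open>E(h,k) s\<close> agree after precomposition with \<open>f\<close>: by the coalgebra laws \<open>s f = \<lambda>\<^sub>f\<close>,
  \<open>t g = \<lambda>\<^sub>g\<close> and naturality of \<open>\<lambda>\<close>, both equal \<open>\<lambda>\<^sub>g h = E(h,k) \<lambda>\<^sub>f\<close>. An isomorphism
  is an epimorphism, so when \<open>f\<close> is invertible it can be cancelled.\<close>

lemma category_comp_arr:
  assumes "category C" "f \<in> Arr C" "g \<in> Arr C" "Dom C g = Cod C f"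
  shows "Comp C g f \<in> Arr C" "Dom C (Comp C g f) = Dom C f" "Cod C (Comp C g f) = Cod C g"
  using assms unfolding category_def by blast+

lemma category_comp_assoc:
  assumes "category C" "f \<in> Arr C" "g \<in> Arr C" "h \<in> Arr C"
    and "Dom C g = Cod C f" "Dom C h = Cod C g"
  shows "Comp C h (Comp C g f) = Comp C (Comp C h g) f"
  using assms unfolding category_def by blast

lemma category_comp_ide_right:
  assumes "category C" "f \<in> Arr C"
  shows "Comp C f (Ide C (Dom C f)) = f"
  using assms unfolding category_def by blast

lemma iso_cancel_right:
  assumes C: "category C" and "iso C f"
    and u: "u \<in> Arr C" "Dom C u = Cod C f"
    and v: "v \<in> Arr C" "Dom C v = Cod C f"
    and eq: "Comp C u f = Comp C v f"
  shows "u = v"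
proof -
  obtain f' where f': "f' \<in> Arr C" "Cod C f' = Dom C f" "Dom C f' = Cod C f"
      "Comp C f f' = Ide C (Cod C f)"
    using \<open>iso C f\<close> unfolding iso_def by blast
  have f: "f \<in> Arr C" using \<open>iso C f\<close> unfolding iso_def by blast
  have "u = Comp C u (Comp C f f')"
    using category_comp_ide_right[OF C u(1)] u(2) f'(4) by simp
  also have "\<dots> = Comp C (Comp C u f) f'"
    using category_comp_assoc[OF C f'(1) f u(1)] f' u by simp
  also have "\<dots> = Comp C (Comp C v f) f'" using eq by simp
  also have "\<dots> = Comp C v (Comp C f f')"
    using category_comp_assoc[OF C f'(1) f v(1)] f' v by simp
  also have "\<dots> = v"
    using category_comp_ide_right[OF C v(1)] v(2) f'(4) by simp
  finally show ?thesis .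
qed

lemma functorial_factorisation_E1_arr:
  assumes "functorial_factorisation C E0 E1 lam rho" "square C f g h k"
  shows "E1 f g h k \<in> Arr C" "Dom C (E1 f g h k) = E0 f" "Cod C (E1 f g h k) = E0 g"
  using assms unfolding functorial_factorisation_def by meson+

lemma functorial_factorisation_lam_natural:
  assumes "functorial_factorisation C E0 E1 lam rho" "square C f g h k"
  shows "Comp C (E1 f g h k) (lam f) = Comp C (lam g) h"
  using assms unfolding functorial_factorisation_def by meson

lemma L_coalgebra_square_precomp_eq:
  assumes C: "category C" and F: "functorial_factorisation C E0 E1 lam rho"
    and s: "L_coalgebra C E0 E1 lam rho sig f s"
    and t: "L_coalgebra C E0 E1 lam rho sig g t"
    and sq: "square C f g h k"
  shows "Comp C (Comp C t k) f = Comp C (Comp C (E1 f g h k) s) f"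
proof -
  note S = sq[unfolded square_def]
  note s = s[unfolded L_coalgebra_def]
  note t = t[unfolded L_coalgebra_def]
  note e = functorial_factorisation_E1_arr[OF F sq]
  note lam_nat = functorial_factorisation_lam_natural[OF F sq]
  have "Comp C (Comp C t k) f = Comp C t (Comp C k f)"
    using category_comp_assoc[OF C, of f k t] S t by simp
  also have "\<dots> = Comp C (Comp C t g) h"
    using category_comp_assoc[OF C, of h g t] S t by simp
  also have "\<dots> = Comp C (E1 f g h k) (Comp C s f)"
    using t s lam_nat by simp
  also have "\<dots> = Comp C (Comp C (E1 f g h k) s) f"
    using category_comp_assoc[OF C, of f s "E1 f g h k"] S s e by simp
  finally show ?thesis .
qed

theorem corollary6p3:
  fixes C :: "('o, 'a) cat"
    and E0 :: "'a \<Rightarrow> 'o" and E1 :: "'a \<Rightarrow> 'a \<Rightarrow> 'a \<Rightarrow> 'a \<Rightarrow> 'a"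
    and lam rho sig :: "'a \<Rightarrow> 'a"
    and f s g t :: 'a
  assumes "comonad_over_dom C E0 E1 lam rho sig"
    and "L_coalgebra C E0 E1 lam rho sig f s"
    and "L_coalgebra C E0 E1 lam rho sig g t"
    and "iso C f"
  shows "\<forall>h k. square C f g h k \<longrightarrow> L_coalgebra_morphism C E0 E1 lam rho sig f s g t h k"
proof (intro allI impI)
  fix h k assume sq: "square C f g h k"
  have C: "category C" and F: "functorial_factorisation C E0 E1 lam rho"
    using assms(1) unfolding comonad_over_dom_def by blast+
  have "Comp C t k = Comp C (E1 f g h k) s"
  proof (rule iso_cancel_right[OF C \<open>iso C f\<close>])
    show "Comp C (Comp C t k) f = Comp C (Comp C (E1 f g h k) s) f"
      using L_coalgebra_square_precomp_eq[OF C F assms(2,3) sq] .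
  qed (use category_comp_arr[OF C] functorial_factorisation_E1_arr[OF F sq] sq assms(2,3)
      in \<open>auto simp: square_def L_coalgebra_def\<close>)
  then show "L_coalgebra_morphism C E0 E1 lam rho sig f s g t h k"
    unfolding L_coalgebra_morphism_def using assms(2,3) sq by blast
qed

end
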